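(* Let $(Q,\cdot)$ be a quasigroup. Then each of the following three identities holds in $Q$ (for all $x,y,z\in Q$) if and only if $Q$ satisfies the left alternative law $x(xy)=(xx)y$ for all $x,y\in Q$: (A13) $x(x(yz))=(xx)(yz)$; (A45) $(x(xy))z=((xx)y)z$; (C12) $x(y(yz))=x((yy)z)$.
   Context: A quasigroup is a set $Q$ with a binary operation $\cdot$ (written as juxtaposition) such that for all $a,b\in Q$ each of the equations $ax=b$ and $ya=b$ has a unique solution in $Q$. *)

theory Defs
  imports Main
begin

definition quasigroup :: "('a \<Rightarrow> 'a \<Rightarrow> 'a) \<Rightarrow> bool" where
  "quasigroup m \<longleftrightarrow> (\<forall>a b. \<exists>!x. m a x = b) \<and> (\<forall>a b. \<exists>!y. m y a = b)"

end

theory Submission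
  imports Defs
begin

text \<open>Each identity is the left alternative law with a term substituted for one variable, or
  with a common factor multiplied on one side.
  Conversely, in (A13) the product \<open>y z\<close> ranges over all of \<open>Q\<close> since left translations are
  onto, while in (A45) and (C12) the extra factor is cancelled on the right or on the left.\<close>

definition left_alternative :: "('a \<Rightarrow> 'a \<Rightarrow> 'a) \<Rightarrow> bool" where
  "left_alternative m \<longleftrightarrow> (\<forall>x y. m x (m x y) = m (m x x) y)"

lemma quasigroup_surj_left: "quasigroup m \<Longrightarrow> surj (m a)"
  unfolding quasigroup_def by (metis surjI)

lemma quasigroup_left_cancel: "quasigroup m \<Longrightarrow> m a x = m a y \<Longrightarrow> x = y"
  unfolding quasigroup_def by metis

lemma quasigroup_right_cancel: "quasigroup m \<Longrightarrow> m x a = m y a \<Longrightarrow> x = y"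
  unfolding quasigroup_def by metis

lemma left_alternative_iff_A13:
  assumes "\<And>a. surj (m a)"
  shows "(\<forall>x y z. m x (m x (m y z)) = m (m x x) (m y z)) \<longleftrightarrow> left_alternative m"
proof
  assume A13: "\<forall>x y z. m x (m x (m y z)) = m (m x x) (m y z)"
  show "left_alternative m"
    unfolding left_alternative_def
  proof (intro allI)
    fix x y
    obtain z where "y = m x z"
      using assms by (metis surjD)
    then show "m x (m x y) = m (m x x) y"
      using A13 by simp
  qed
qed (simp add: left_alternative_def)

lemma left_alternative_iff_A45:
  assumes "\<And>a x y. m x a = m y a \<Longrightarrow> x = y"
  shows "(\<forall>x y z. m (m x (m x y)) z = m (m (m x x) y) z) \<longleftrightarrow> left_alternative m"
  unfolding left_alternative_def using assms by metis

lemma left_alternative_iff_C12: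
  assumes "\<And>a x y. m a x = m a y \<Longrightarrow> x = y"
  shows "(\<forall>x y z. m x (m y (m y z)) = m x (m (m y y) z)) \<longleftrightarrow> left_alternative m"
  unfolding left_alternative_def using assms by metis

theorem mainTheorem3:
  fixes m :: "'a \<Rightarrow> 'a \<Rightarrow> 'a"
  assumes "quasigroup m"
  shows "((\<forall>x y z. m x (m x (m y z)) = m (m x x) (m y z)) \<longleftrightarrow> (\<forall>x y. m x (m x y) = m (m x x) y))
       \<and> ((\<forall>x y z. m (m x (m x y)) z = m (m (m x x) y) z) \<longleftrightarrow> (\<forall>x y. m x (m x y) = m (m x x) y))
       \<and> ((\<forall>x y z. m x (m y (m y z)) = m x (m (m y y) z)) \<longleftrightarrow> (\<forall>x y. m x (m x y) = m (m x x) y))"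
  using left_alternative_iff_A13[of m, OF quasigroup_surj_left[OF assms]]
    left_alternative_iff_A45[of m, OF quasigroup_right_cancel[OF assms]]
    left_alternative_iff_C12[of m, OF quasigroup_left_cancel[OF assms]]
  unfolding left_alternative_def by (simp only:)

end
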